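(* Let $k$ be a positive integer. Then: (i) for all positive divisors $l$ and $d$ of $k$, $$c(k,l,d)=c(k/d,\,k/l);$$ (ii) for every positive divisor $d$ of $k$, $$\beta_{k,d}(t)=k\,t^k\,M(1/t;\,k/d,\,k)-1;$$ (iii) for every integer $n$, $$M(t;n,k)=Z_{R(C_k)}^{\chi_n}(t,t,\dots,t).$$
   Context: Let $\epsilon_k:=e^{2\pi i/k}$ and let $(a,b)$ denote the greatest common divisor. The Ramanujan sum is $c(n,k):=\sum_{1\le m\le k,\ (m,k)=1}\epsilon_k^{mn}$ for an integer $n$ and a positive integer $k$. The $n$-necklace polynomial is $M(t;n,k):=\frac1k\sum_{d\mid k}c(n,k/d)\,t^d$. For divisors $l,d$ of $k$, set $c(k,l,d):=\sum_{1\le m\le k,\ (m,k)=l}\epsilon_d^{m}$. The Harer–Zagier polynomial is $\beta_{k,d}(t):=\sum_{r=1}^{k-1}\epsilon_d^{r}\,t^{k-(k,r)}$ for $d\mid k$ (equivalently $\sum_{l\mid k,\ l<k}c(k,l,d)t^{k-l}$). For a permutation group $H$ on a set of $v$ elements and a character $\chi$ of $H$, the generalized Redfield–Pólya cycle index is $Z_H^\chi(t_1,\dots,t_v):=\frac{1}{|H|}\sum_{h\in H}\chi(h)\prod_{j=1}^v t_j^{c_j(h)}$, where $c_j(h)$ is the number of cycles of length $j$ of $h$. For a finite group $G$, $R(G)$ denotes its image under the (left) regular representation, a permutation group on the set $G$. $C_k$ is the cyclic group of order $k$, and $\chi_n$ is the irreducible character of $C_k$ whose value on a fixed generator is $\epsilon_k^n$.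 *)

theory Defs
  imports Complex_Main "HOL-Library.FuncSet"
begin

definition eps :: "nat \<Rightarrow> complex" where
  "eps k = exp (2 * of_real pi * \<i> / of_nat k)"

definition ramanujan :: "int \<Rightarrow> nat \<Rightarrow> complex" where
  "ramanujan n k = (\<Sum>m\<in>{m. 1 \<le> m \<and> m \<le> k \<and> coprime m k}. eps k powi (int m * n))"

definition necklace :: "complex \<Rightarrow> int \<Rightarrow> nat \<Rightarrow> complex" where
  "necklace t n k = (1 / of_nat k) * (\<Sum>d\<in>{d. d dvd k}. ramanujan n (k div d) * t ^ d)"

definition csum3 :: "nat \<Rightarrow> nat \<Rightarrow> nat \<Rightarrow> complex" where
  "csum3 k l d = (\<Sum>m\<in>{m. 1 \<le> m \<and> m \<le> k \<and> gcd m k = l}. eps d ^ m)"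

definition beta :: "nat \<Rightarrow> nat \<Rightarrow> complex \<Rightarrow> complex" where
  "beta k d t = (\<Sum>r=1..k-1. eps d ^ r * t ^ (k - gcd k r))"

definition orbit_of :: "('a \<Rightarrow> 'a) \<Rightarrow> 'a \<Rightarrow> 'a set" where
  "orbit_of h x = {(h ^^ i) x | i. True}"

definition cyc_count :: "'a set \<Rightarrow> ('a \<Rightarrow> 'a) \<Rightarrow> nat \<Rightarrow> nat" where
  "cyc_count S h j = card {orbit_of h x | x. x \<in> S \<and> card (orbit_of h x) = j}"

definition cycle_index ::
  "'a set \<Rightarrow> ('a \<Rightarrow> 'a) set \<Rightarrow> (('a \<Rightarrow> 'a) \<Rightarrow> complex) \<Rightarrow> (nat \<Rightarrow> complex) \<Rightarrow> complex" where
  "cycle_index S H chi ts =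
     (1 / of_nat (card H)) *
     (\<Sum>h\<in>H. chi h * (\<Prod>j=1..card S. ts j ^ cyc_count S h j))"

text \<open>The cyclic group C_k realised as {0..<k} with addition mod k (generator 1);
  its left regular representation: m acts by x \<mapsto> (m + x) mod k.\<close>
definition cyc_mult :: "nat \<Rightarrow> nat \<Rightarrow> nat \<Rightarrow> nat" where
  "cyc_mult k m x = (m + x) mod k"

definition regular_perm :: "nat \<Rightarrow> nat \<Rightarrow> (nat \<Rightarrow> nat)" where
  "regular_perm k m = restrict (cyc_mult k m) {0..<k}"

definition regular_Ck :: "nat \<Rightarrow> (nat \<Rightarrow> nat) set" where
  "regular_Ck k = regular_perm k ` {0..<k}"

text \<open>Character chi_n of C_k: value eps_k^n on the generator 1, hence eps_k^(n m) on m.\<close>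
definition chi :: "nat \<Rightarrow> int \<Rightarrow> nat \<Rightarrow> complex" where
  "chi k n m = eps k powi (n * int m)"

text \<open>chi_n transported to R(C_k) (the regular representation is injective)\<close>
definition chi_R :: "nat \<Rightarrow> int \<Rightarrow> (nat \<Rightarrow> nat) \<Rightarrow> complex" where
  "chi_R k n h = chi k n (THE m. m < k \<and> regular_perm k m = h)"

end

theory Submission
  imports Defs "HOL-Number_Theory.Cong"
begin

text \<open>
  Sort the residues m modulo k by l = gcd(m, k). Writing m = l m' with m' coprime to k/l
  turns a sum of roots of unity over one gcd class into a Ramanujan sum; this gives (i)
  and the expansion k M(t; n, k) = \<Sum>m<k. \<epsilon>_k^(m n) t^gcd(m, k).
  Substituting 1/t in it gives (ii). For (iii), translation by m on C_k has the residue
  classes modulo gcd(m, k) as its cycles, so it contributes \<chi>_n(m) t^gcd(m, k) to the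
  cycle index.
\<close>

lemma eps_powi: "eps k powi z = exp (2 * of_real pi * \<i> * of_real (of_int z / of_nat k))"
proof -
  have "eps k powi z = exp (of_int z * (2 * of_real pi * \<i> / of_nat k))"
    unfolding eps_def by (rule exp_power_int)
  then show ?thesis by (simp add: field_simps)
qed

lemma eps_powi_cong:
  assumes "of_int a / of_nat k = (of_int b / of_nat k' :: real)"
  shows "eps k powi a = eps k' powi b"
  unfolding eps_powi assms ..

lemma eps_powi_multiple: "eps k powi (int k * z) = 1"
proof (cases "k = 0")
  case False
  have "eps k powi (int k * z) = exp (2 * of_real pi * \<i>) powi z"
    unfolding eps_powi exp_power_int using False by (simp add: field_simps)
  then show ?thesis by simp
qed simp

lemma eps_pow_eq_eps_powi:
  assumes "d dvd k" "k > 0"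
  shows "eps d ^ m = eps k powi (int m * int (k div d))"
proof -
  have "d > 0" using assms by (auto intro: ccontr)
  then have "real m / real d = real m * real (k div d) / real k"
    using assms by (simp add: real_of_nat_div field_simps)
  then show ?thesis using eps_powi_cong[of "int m" d] by simp
qed

lemma sum_gcd_eq_reindex:
  fixes g :: "nat \<Rightarrow> 'a::comm_monoid_add"
  assumes "k > 0" and "l dvd k"
  shows "(\<Sum>m\<in>{m. 1 \<le> m \<and> m \<le> k \<and> gcd m k = l}. g m)
       = (\<Sum>m\<in>{m. 1 \<le> m \<and> m \<le> k div l \<and> coprime m (k div l)}. g (l * m))"
proof -
  obtain b where kb: "k = l * b" using assms(2) by blast
  have "l > 0" using assms kb by auto
  then have "k div l = b" using kb by simp
  then show ?thesis
  proof (intro sum.reindex_bij_witness[of _ "\<lambda>m. l * m" "\<lambda>m. m div l"])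
    fix m assume "m \<in> {m. 1 \<le> m \<and> m \<le> k \<and> gcd m k = l}"
    then have m: "1 \<le> m" "m \<le> k" "gcd m k = l" by auto
    then obtain a where ma: "m = l * a" by (metis gcd_dvd1 dvdE)
    have "l * gcd a b = l" using m(3) unfolding ma kb by (simp add: gcd_mult_distrib_nat)
    then have "gcd a b = 1" using \<open>l > 0\<close> by simp
    moreover have "1 \<le> a" "a \<le> b" using m(1,2) \<open>l > 0\<close> unfolding ma kb by (auto intro: ccontr)
    ultimately show "m div l \<in> {m. 1 \<le> m \<and> m \<le> k div l \<and> coprime m (k div l)}"
      using \<open>l > 0\<close> \<open>k div l = b\<close> ma by (simp add: coprime_iff_gcd_eq_1)
    show "l * (m div l) = m" "g (l * (m div l)) = g m" using ma \<open>l > 0\<close> by simp_all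
  next
    fix a assume "a \<in> {m. 1 \<le> m \<and> m \<le> k div l \<and> coprime m (k div l)}"
    then have a: "1 \<le> a" "a \<le> b" "coprime a b" using \<open>k div l = b\<close> by auto
    have "gcd (l * a) k = l" unfolding kb using a(3)
      by (simp add: gcd_mult_distrib_nat[symmetric] coprime_iff_gcd_eq_1)
    then show "l * a \<in> {m. 1 \<le> m \<and> m \<le> k \<and> gcd m k = l}" using a \<open>l > 0\<close> kb by simp
    show "l * a div l = a" using \<open>l > 0\<close> by simp
  qed
qed

lemma sum_gcd_class_eq_ramanujan:
  assumes "k > 0" and "l dvd k"
  shows "(\<Sum>m\<in>{m. 1 \<le> m \<and> m \<le> k \<and> gcd m k = l}. eps k powi (int m * n))
       = ramanujan n (k div l)"
proof -
  have "l > 0" using assms by (auto intro: ccontr)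
  have "eps k powi (int (l * m) * n) = eps (k div l) powi (int m * n)" for m
    by (rule eps_powi_cong) (use assms \<open>l > 0\<close> in \<open>simp add: real_of_nat_div field_simps\<close>)
  then show ?thesis unfolding ramanujan_def sum_gcd_eq_reindex[OF assms] by simp
qed

lemma csum3_eq_ramanujan:
  assumes "k > 0" and "l dvd k" and "d dvd k"
  shows "csum3 k l d = ramanujan (int (k div d)) (k div l)"
  unfolding csum3_def eps_pow_eq_eps_powi[OF assms(3,1)]
  by (rule sum_gcd_class_eq_ramanujan[OF assms(1,2)])

lemma necklace_eq_sum_gcd:
  assumes "k > 0"
  shows "necklace t n k = (\<Sum>m=0..<k. eps k powi (int m * n) * t ^ gcd m k) / of_nat k"
proof -
  let ?f = "\<lambda>m. eps k powi (int m * n) * t ^ gcd m k"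
  have "(\<Sum>m=0..<k. ?f m) = (\<Sum>m=1..k. ?f m)"
  proof -
    have "?f k = ?f 0" using eps_powi_multiple[of k n] by simp
    moreover have "{0..<k} = insert 0 {1..<k}" "{1..k} = insert k {1..<k}" using assms by auto
    ultimately show ?thesis by simp
  qed
  also have "\<dots> = (\<Sum>e | e dvd k. \<Sum>m\<in>{m. m \<in> {1..k} \<and> gcd m k = e}. ?f m)"
    by (rule sum.group[symmetric]) (use assms in auto)
  also have "\<dots> = (\<Sum>e | e dvd k. ramanujan n (k div e) * t ^ e)"
  proof (intro sum.cong refl)
    fix e assume "e \<in> {e. e dvd k}"
    then have "e dvd k" by simp
    have "(\<Sum>m\<in>{m. m \<in> {1..k} \<and> gcd m k = e}. ?f m)
        = (\<Sum>m\<in>{m. 1 \<le> m \<and> m \<le> k \<and> gcd m k = e}. eps k powi (int m * n)) * t ^ e"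
      by (simp add: sum_distrib_right)
    also have "\<dots> = ramanujan n (k div e) * t ^ e"
      by (simp only: sum_gcd_class_eq_ramanujan[OF assms \<open>e dvd k\<close>])
    finally show "(\<Sum>m\<in>{m. m \<in> {1..k} \<and> gcd m k = e}. ?f m) = ramanujan n (k div e) * t ^ e" .
  qed
  finally show ?thesis unfolding necklace_def by simp
qed

lemma beta_eq_necklace:
  assumes "k > 0" and "d dvd k" and "t \<noteq> 0"
  shows "beta k d t = of_nat k * t ^ k * necklace (1 / t) (int (k div d)) k - 1"
proof -
  have "of_nat k * t ^ k * necklace (1 / t) (int (k div d)) k
      = (\<Sum>m=0..<k. t ^ k * (eps k powi (int m * int (k div d)) * (1 / t) ^ gcd m k))"
    using assms(1) by (simp add: necklace_eq_sum_gcd sum_distrib_left[symmetric])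
  also have "\<dots> = (\<Sum>m=0..<k. eps d ^ m * t ^ (k - gcd m k))"
  proof (intro sum.cong refl)
    fix m
    have "gcd m k \<le> k" using assms(1) by (simp add: dvd_imp_le)
    then show "t ^ k * (eps k powi (int m * int (k div d)) * (1 / t) ^ gcd m k)
        = eps d ^ m * t ^ (k - gcd m k)"
      using assms by (simp add: eps_pow_eq_eps_powi power_diff power_one_over field_simps)
  qed
  also have "\<dots> = beta k d t + 1"
  proof -
    have "{0..<k} = insert 0 {1..k-1}" using assms(1) by auto
    then show ?thesis unfolding beta_def by (simp add: gcd.commute)
  qed
  finally show ?thesis by simp
qed

lemma funpow_regular_perm:
  assumes "x < k"
  shows "(regular_perm k m ^^ i) x = (x + i * m) mod k"
proof (induction i)
  case (Suc i)
  have "(x + i * m) mod k < k" using assms by simp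
  then show ?case
    using Suc.IH by (simp add: regular_perm_def cyc_mult_def mod_add_right_eq add_ac)
qed (use assms in simp)

lemma orbit_of_regular_perm:
  assumes "x < k"
  shows "orbit_of (regular_perm k m) x = {y. y < k \<and> [y = x] (mod gcd m k)}"
proof (intro equalityI subsetI)
  fix y assume "y \<in> orbit_of (regular_perm k m) x"
  then obtain i where y: "y = (x + i * m) mod k"
    unfolding orbit_of_def funpow_regular_perm[OF assms] by auto
  have "y mod gcd m k = (x + i * m) mod gcd m k" unfolding y by (simp add: mod_mod_cancel)
  also have "\<dots> = x mod gcd m k" by (simp add: mod_add_right_eq[symmetric])
  finally show "y \<in> {y. y < k \<and> [y = x] (mod gcd m k)}"
    using y assms by (simp add: cong_def)
next
  fix y assume "y \<in> {y. y < k \<and> [y = x] (mod gcd m k)}"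
  moreover have "[k = 0] (mod gcd m k)" by (simp add: cong_0_iff)
  ultimately have y: "y < k" "[y + k = x] (mod gcd m k)" using cong_add[of y x _ k 0] by auto
  then have "gcd m k dvd y + k - x" using y(2) assms by (subst (asm) cong_altdef_nat) auto
  then obtain i where "[m * i = y + k - x] (mod k)" using cong_solve_dvd_nat by blast
  then have "[x + i * m = y + k] (mod k)"
    using assms cong_add_lcancel_nat[of x "m * i" "y + k - x"] by (simp add: mult.commute)
  then have "(x + i * m) mod k = y" using y(1) by (simp add: cong_def)
  then show "y \<in> orbit_of (regular_perm k m) x"
    unfolding orbit_of_def funpow_regular_perm[OF assms] by blast
qed

lemma card_orbits_regular_perm:
  assumes "k > 0"
  shows "card {orbit_of (regular_perm k m) x | x. x \<in> {0..<k}} = gcd m k"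
proof -
  let ?g = "gcd m k"
  let ?C = "\<lambda>r. {y. y < k \<and> [y = r] (mod ?g)}"
  have "?g \<le> k" using assms by (simp add: dvd_imp_le)
  have "{orbit_of (regular_perm k m) x | x. x \<in> {0..<k}} = ?C ` {0..<?g}"
  proof (intro equalityI subsetI)
    fix A assume "A \<in> {orbit_of (regular_perm k m) x | x. x \<in> {0..<k}}"
    then obtain x where "A = ?C x" by (auto simp: orbit_of_regular_perm)
    also have "?C x = ?C (x mod ?g)" by (simp add: cong_def)
    finally have A: "A = ?C (x mod ?g)" .
    have "?C (x mod ?g) \<in> ?C ` {0..<?g}" using assms by (intro imageI) simp
    then show "A \<in> ?C ` {0..<?g}" unfolding A .
  next
    fix A assume "A \<in> ?C ` {0..<?g}"
    then obtain r where "r < ?g" and A: "A = ?C r" by auto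
    then have "r < k" using \<open>?g \<le> k\<close> by simp
    have "A = orbit_of (regular_perm k m) r" unfolding A orbit_of_regular_perm[OF \<open>r < k\<close>] ..
    then show "A \<in> {orbit_of (regular_perm k m) x | x. x \<in> {0..<k}}" using \<open>r < k\<close> by auto
  qed
  moreover have "inj_on ?C {0..<?g}"
  proof (rule inj_onI)
    fix r s assume "r \<in> {0..<?g}" "s \<in> {0..<?g}" "?C r = ?C s"
    have "r \<in> ?C r" using \<open>r \<in> {0..<?g}\<close> \<open>?g \<le> k\<close> by simp
    then have "r \<in> ?C s" unfolding \<open>?C r = ?C s\<close> .
    then show "r = s" using \<open>r \<in> {0..<?g}\<close> \<open>s \<in> {0..<?g}\<close> by (simp add: cong_def)
  qed
  ultimately show ?thesis by (simp add: card_image)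
qed

lemma prod_power_cyc_count:
  assumes "finite S" and "h ` S \<subseteq> S"
  shows "(\<Prod>j=1..card S. t ^ cyc_count S h j) = t ^ card {orbit_of h x | x. x \<in> S}"
proof -
  let ?O = "{orbit_of h x | x. x \<in> S}"
  have "(h ^^ i) x \<in> S" if "x \<in> S" for x i
    using that assms(2) by (induction i) auto
  then have orbit_subset: "orbit_of h x \<subseteq> S" if "x \<in> S" for x
    using that unfolding orbit_of_def by auto
  have orbit_nonempty: "x \<in> orbit_of h x" for x
    unfolding orbit_of_def by (auto intro: exI[of _ 0])
  have "finite ?O" using assms(1) by simp
  moreover have "card ` ?O \<subseteq> {1..card S}"
  proof
    fix n assume "n \<in> card ` ?O"
    then obtain x where x: "x \<in> S" and n: "n = card (orbit_of h x)" by auto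
    have "finite (orbit_of h x)" using orbit_subset[OF x] assms(1) by (rule finite_subset)
    then have "1 \<le> n" unfolding n using orbit_nonempty[of x] by (auto simp: Suc_le_eq card_gt_0_iff)
    moreover have "n \<le> card S" unfolding n using card_mono[OF assms(1) orbit_subset[OF x]] .
    ultimately show "n \<in> {1..card S}" by simp
  qed
  ultimately have "(\<Sum>j=1..card S. card {A \<in> ?O. card A = j}) = card ?O"
    using sum.group[of ?O "{1..card S}" card "\<lambda>_. 1::nat"] by simp
  moreover have "cyc_count S h j = card {A \<in> ?O. card A = j}" for j
    unfolding cyc_count_def by (intro arg_cong[where f = card]) auto
  ultimately have "(\<Sum>j=1..card S. cyc_count S h j) = card ?O" by simp
  then show ?thesis by (simp only: power_sum[symmetric])
qed

lemma inj_on_regular_perm: "inj_on (regular_perm k) {0..<k}"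
proof (rule inj_onI)
  fix a b assume "a \<in> {0..<k}" "b \<in> {0..<k}" "regular_perm k a = regular_perm k b"
  moreover have "regular_perm k a 0 = a" "regular_perm k b 0 = b"
    using \<open>a \<in> {0..<k}\<close> \<open>b \<in> {0..<k}\<close> by (auto simp: regular_perm_def cyc_mult_def)
  ultimately show "a = b" by metis
qed

lemma chi_R_regular_perm:
  assumes "m < k"
  shows "chi_R k n (regular_perm k m) = chi k n m"
proof -
  have "(THE m'. m' < k \<and> regular_perm k m' = regular_perm k m) = m"
    using assms inj_on_regular_perm[of k] by (auto simp: inj_on_def)
  then show ?thesis unfolding chi_R_def by simp
qed

lemma necklace_eq_cycle_index:
  assumes "k > 0"
  shows "necklace t n k = cycle_index {0..<k} (regular_Ck k) (chi_R k n) (\<lambda>_. t)"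
proof -
  have "regular_perm k m ` {0..<k} \<subseteq> {0..<k}" for m
    using assms by (auto simp: regular_perm_def cyc_mult_def)
  then have cycles: "(\<Prod>j=1..k. t ^ cyc_count {0..<k} (regular_perm k m) j) = t ^ gcd m k" for m
    using prod_power_cyc_count[of "{0..<k}" "regular_perm k m" t]
      card_orbits_regular_perm[OF assms, of m] by simp
  have "card (regular_Ck k) = k"
    unfolding regular_Ck_def by (simp add: card_image inj_on_regular_perm)
  then have "cycle_index {0..<k} (regular_Ck k) (chi_R k n) (\<lambda>_. t) = (\<Sum>m=0..<k.
      chi_R k n (regular_perm k m) * (\<Prod>j=1..k. t ^ cyc_count {0..<k} (regular_perm k m) j)) / of_nat k"
    unfolding cycle_index_def regular_Ck_def by (simp add: sum.reindex inj_on_regular_perm)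
  also have "\<dots> = (\<Sum>m=0..<k. chi k n m * t ^ gcd m k) / of_nat k"
    using cycles by (simp add: chi_R_regular_perm)
  finally show ?thesis by (simp add: necklace_eq_sum_gcd[OF assms] chi_def mult.commute)
qed

theorem proposition1:
  fixes k :: nat
  assumes "k > 0"
  shows "(\<forall>l d. l dvd k \<and> d dvd k \<longrightarrow> csum3 k l d = ramanujan (int (k div d)) (k div l))
       \<and> (\<forall>d t. d dvd k \<and> t \<noteq> 0 \<longrightarrow>
            beta k d t = of_nat k * t ^ k * necklace (1 / t) (int (k div d)) k - 1)
       \<and> (\<forall>(n::int) t. necklace t n k =
            cycle_index {0..<k} (regular_Ck k) (chi_R k n) (\<lambda>_. t))"
  using csum3_eq_ramanujan[OF assms] beta_eq_necklace[OF assms] necklace_eq_cycle_index[OF assms]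
  by blast

end
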